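(* Let $(M_i)_{i\in I}$ be a family of strongly sofic monoids. Then the product monoid $\prod_{i\in I}M_i$ is strongly sofic.
   Context: Hamming metric on $\operatorname{Map}(D)$ (monoid of maps $D\to D$, $D$ finite non-empty): $d_D^{\mathrm{Ham}}(f,g)=\frac{1}{|D|}|\{v:f(v)\ne g(v)\}|$. A monoid $M$ is strongly sofic if for every finite $K\subset M$ there is an integer $\Delta_K\ge1$ such that for every $\varepsilon>0$ there exist a non-empty finite set $D$ and a map $\sigma\colon M\to\operatorname{Map}(D)$ with (1) $\sigma(1_M)=\mathrm{Id}_D$; (2) $d_D^{\mathrm{Ham}}(\sigma(k_1k_2),\sigma(k_1)\sigma(k_2))\le\varepsilon$ for $k_1,k_2\in K$; (3) $d_D^{\mathrm{Ham}}(\sigma(k_1),\sigma(k_2))\ge1-\varepsilon$ for distinct $k_1,k_2\in K$; (4) $|\sigma(k)^{-1}(v)|\le\Delta_K$ for $k\in K$, $v\in D$. The product monoid has componentwise multiplication. *)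

theory Defs
  imports Complex_Main "HOL-Algebra.Product_Groups"
begin

text \<open>Normalized Hamming distance between maps on the finite set D
  (maps D to D are represented by functions nat to nat; only values on D matter).\<close>
definition ham_dist :: "nat set \<Rightarrow> (nat \<Rightarrow> nat) \<Rightarrow> (nat \<Rightarrow> nat) \<Rightarrow> real" where
  "ham_dist D f g = real (card {v \<in> D. f v \<noteq> g v}) / real (card D)"

definition strongly_sofic :: "('a, 'b) monoid_scheme \<Rightarrow> bool" where
  "strongly_sofic M \<longleftrightarrow>
     (\<forall>K. K \<subseteq> carrier M \<and> finite K \<longrightarrow>
       (\<exists>\<Delta>::nat. \<Delta> \<ge> 1 \<and>
         (\<forall>\<epsilon>::real. \<epsilon> > 0 \<longrightarrow>
           (\<exists>(D::nat set) (\<sigma>::'a \<Rightarrow> nat \<Rightarrow> nat).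
              finite D \<and> D \<noteq> {} \<and>
              (\<forall>m \<in> carrier M. \<sigma> m ` D \<subseteq> D) \<and>
              (\<forall>v \<in> D. \<sigma> \<one>\<^bsub>M\<^esub> v = v) \<and>
              (\<forall>k1 \<in> K. \<forall>k2 \<in> K.
                  ham_dist D (\<sigma> (k1 \<otimes>\<^bsub>M\<^esub> k2)) (\<sigma> k1 \<circ> \<sigma> k2) \<le> \<epsilon>) \<and>
              (\<forall>k1 \<in> K. \<forall>k2 \<in> K. k1 \<noteq> k2 \<longrightarrow>
                  ham_dist D (\<sigma> k1) (\<sigma> k2) \<ge> 1 - \<epsilon>) \<and>
              (\<forall>k \<in> K. \<forall>v \<in> D. card {u \<in> D. \<sigma> k u = v} \<le> \<Delta>)))))"

end

theory Submission
  imports Defs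
begin

(* Given a finite K in the product, choose a finite set J of coordinates on which any two
   distinct elements of K differ. Take sofic approximations (D j, \<sigma> j) of the projections of K
   for j \<in> J with error \<epsilon>/(|J|+1) and let the product act coordinatewise on \<Pi> j\<in>J. D j.
   A point where the product maps disagree has a coordinate where the factor maps disagree, so the
   multiplicative defects add up to at most \<epsilon>; distinct elements of K differ in some coordinate
   j \<in> J, which gives distance at least that of the j-th factor; and a fibre of the product map is
   the product of the fibres, bounded by \<Prod> j\<in>J. \<Delta> j. A bijection with an initial segment
   of nat finally moves the approximation to the carrier demanded by the definition. *)

(* Same as ham_dist, but on an arbitrary carrier type, so that approximations may live on
   product sets. *)
definition hamming_dist :: "'p set \<Rightarrow> ('p \<Rightarrow> 'q) \<Rightarrow> ('p \<Rightarrow> 'q) \<Rightarrow> real" where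
  "hamming_dist D f g = real (card {v \<in> D. f v \<noteq> g v}) / real (card D)"

lemma ham_dist_eq_hamming_dist: "ham_dist = hamming_dist"
  by (simp add: fun_eq_iff ham_dist_def hamming_dist_def)

lemma hamming_dist_cong:
  assumes "\<And>v. v \<in> D \<Longrightarrow> f v = f' v" "\<And>v. v \<in> D \<Longrightarrow> g v = g' v"
  shows "hamming_dist D f g = hamming_dist D f' g'"
  using assms by (simp add: hamming_dist_def cong: conj_cong)

lemma hamming_dist_mono:
  assumes "finite D" "\<And>v. v \<in> D \<Longrightarrow> f v \<noteq> g v \<Longrightarrow> f' v \<noteq> g' v"
  shows "hamming_dist D f g \<le> hamming_dist D f' g'"
  unfolding hamming_dist_def
  using assms by (intro divide_right_mono card_mono of_nat_mono) auto

lemma hamming_dist_le_sum: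
  assumes "finite D" "finite J"
    and "\<And>v. v \<in> D \<Longrightarrow> f v \<noteq> g v \<Longrightarrow> \<exists>j\<in>J. f' j v \<noteq> g' j v"
  shows "hamming_dist D f g \<le> (\<Sum>j\<in>J. hamming_dist D (f' j) (g' j))"
proof -
  have "card {v \<in> D. f v \<noteq> g v} \<le> card (\<Union>j\<in>J. {v \<in> D. f' j v \<noteq> g' j v})"
    using assms by (intro card_mono) auto
  also have "\<dots> \<le> (\<Sum>j\<in>J. card {v \<in> D. f' j v \<noteq> g' j v})"
    using assms(2) by (rule card_UN_le)
  finally show ?thesis
    unfolding hamming_dist_def sum_divide_distrib[symmetric]
    by (intro divide_right_mono) (simp_all flip: of_nat_sum)
qed

lemma card_Collect_inv_into:
  assumes "bij_betw e P N"
  shows "card {n \<in> N. Q (inv_into P e n)} = card {p \<in> P. Q p}"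
proof -
  have "bij_betw (inv_into P e) {n \<in> N. Q (inv_into P e n)} {p \<in> P. Q p}"
    using bij_betw_inv_into[OF assms] unfolding bij_betw_def
    by (auto simp: inj_on_def image_iff)
  then show ?thesis by (rule bij_betw_same_card)
qed

lemma hamming_dist_conj:
  assumes "bij_betw e P N" "f ` P \<subseteq> P" "g ` P \<subseteq> P"
  shows "hamming_dist N (\<lambda>n. e (f (inv_into P e n))) (\<lambda>n. e (g (inv_into P e n))) = hamming_dist P f g"
proof -
  have "{p \<in> P. e (f p) \<noteq> e (g p)} = {p \<in> P. f p \<noteq> g p}"
    using assms by (auto simp: bij_betw_def image_subset_iff dest: inj_onD)
  then show ?thesis
    using card_Collect_inv_into[OF assms(1), of "\<lambda>p. e (f p) \<noteq> e (g p)"] bij_betw_same_card[OF assms(1)]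
    by (simp add: hamming_dist_def)
qed

lemma card_fiber_conj:
  assumes "bij_betw e P N" "f ` P \<subseteq> P" "v \<in> N"
  shows "card {n \<in> N. e (f (inv_into P e n)) = v} = card {p \<in> P. f p = inv_into P e v}"
proof -
  have "{p \<in> P. e (f p) = v} = {p \<in> P. f p = inv_into P e v}"
    using assms by (auto simp: bij_betw_def inj_on_eq_iff inv_into_into f_inv_into_f)
  then show ?thesis
    using card_Collect_inv_into[OF assms(1), of "\<lambda>p. e (f p) = v"] by simp
qed

lemma hamming_dist_conj_comp:
  assumes "bij_betw e P N" "f ` P \<subseteq> P" "g ` P \<subseteq> P" "h ` P \<subseteq> P"
  shows "hamming_dist N (\<lambda>n. e (f (inv_into P e n)))
      ((\<lambda>n. e (g (inv_into P e n))) \<circ> (\<lambda>n. e (h (inv_into P e n))))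
    = hamming_dist P f (g \<circ> h)"
proof -
  have "hamming_dist N (\<lambda>n. e (f (inv_into P e n)))
      ((\<lambda>n. e (g (inv_into P e n))) \<circ> (\<lambda>n. e (h (inv_into P e n))))
    = hamming_dist N (\<lambda>n. e (f (inv_into P e n))) (\<lambda>n. e ((g \<circ> h) (inv_into P e n)))"
    using assms
    by (intro hamming_dist_cong) (auto simp: bij_betw_def inv_into_into inv_into_f_f image_subset_iff)
  also have "\<dots> = hamming_dist P f (g \<circ> h)"
    using assms by (intro hamming_dist_conj) (auto simp: image_subset_iff)
  finally show ?thesis .
qed

definition sofic_approx ::
    "('a, 'b) monoid_scheme \<Rightarrow> 'a set \<Rightarrow> nat \<Rightarrow> real \<Rightarrow> 'p set \<Rightarrow> ('a \<Rightarrow> 'p \<Rightarrow> 'p) \<Rightarrow> bool" where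
  "sofic_approx M K \<Delta> \<epsilon> D \<sigma> \<longleftrightarrow>
     finite D \<and> D \<noteq> {} \<and>
     (\<forall>m \<in> carrier M. \<sigma> m ` D \<subseteq> D) \<and>
     (\<forall>v \<in> D. \<sigma> \<one>\<^bsub>M\<^esub> v = v) \<and>
     (\<forall>k1 \<in> K. \<forall>k2 \<in> K. hamming_dist D (\<sigma> (k1 \<otimes>\<^bsub>M\<^esub> k2)) (\<sigma> k1 \<circ> \<sigma> k2) \<le> \<epsilon>) \<and>
     (\<forall>k1 \<in> K. \<forall>k2 \<in> K. k1 \<noteq> k2 \<longrightarrow> hamming_dist D (\<sigma> k1) (\<sigma> k2) \<ge> 1 - \<epsilon>) \<and>
     (\<forall>k \<in> K. \<forall>v \<in> D. card {u \<in> D. \<sigma> k u = v} \<le> \<Delta>)"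

lemma strongly_sofic_iff:
  "strongly_sofic M \<longleftrightarrow>
     (\<forall>K. K \<subseteq> carrier M \<and> finite K \<longrightarrow>
       (\<exists>\<Delta>::nat. \<Delta> \<ge> 1 \<and> (\<forall>\<epsilon>::real. \<epsilon> > 0 \<longrightarrow> (\<exists>(D::nat set) \<sigma>. sofic_approx M K \<Delta> \<epsilon> D \<sigma>))))"
  unfolding strongly_sofic_def sofic_approx_def ham_dist_eq_hamming_dist ..

lemma sofic_approxI:
  assumes "finite D" "D \<noteq> {}"
    and "\<And>m. m \<in> carrier M \<Longrightarrow> \<sigma> m ` D \<subseteq> D"
    and "\<And>v. v \<in> D \<Longrightarrow> \<sigma> \<one>\<^bsub>M\<^esub> v = v"
    and "\<And>k1 k2. k1 \<in> K \<Longrightarrow> k2 \<in> K \<Longrightarrow> hamming_dist D (\<sigma> (k1 \<otimes>\<^bsub>M\<^esub> k2)) (\<sigma> k1 \<circ> \<sigma> k2) \<le> \<epsilon>"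
    and "\<And>k1 k2. k1 \<in> K \<Longrightarrow> k2 \<in> K \<Longrightarrow> k1 \<noteq> k2 \<Longrightarrow> 1 - \<epsilon> \<le> hamming_dist D (\<sigma> k1) (\<sigma> k2)"
    and "\<And>k v. k \<in> K \<Longrightarrow> v \<in> D \<Longrightarrow> card {u \<in> D. \<sigma> k u = v} \<le> \<Delta>"
  shows "sofic_approx M K \<Delta> \<epsilon> D \<sigma>"
  using assms by (simp add: sofic_approx_def)

lemma sofic_approx_conj:
  assumes "monoid M" "K \<subseteq> carrier M" "bij_betw e P N" "sofic_approx M K \<Delta> \<epsilon> P \<tau>"
  shows "sofic_approx M K \<Delta> \<epsilon> N (\<lambda>m n. e (\<tau> m (inv_into P e n)))"
proof -
  define \<sigma> where "\<sigma> = (\<lambda>m n. e (\<tau> m (inv_into P e n)))"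
  have inv: "inv_into P e n \<in> P" "e (inv_into P e n) = n" if "n \<in> N" for n
    using assms(3) that by (auto simp: bij_betw_def inv_into_into f_inv_into_f)
  have into_P: "\<tau> m ` P \<subseteq> P" if "m \<in> carrier M" for m
    using assms(4) that by (simp add: sofic_approx_def)
  have KM: "k \<in> carrier M" if "k \<in> K" for k using assms(2) that by blast
  have "sofic_approx M K \<Delta> \<epsilon> N \<sigma>"
  proof (rule sofic_approxI)
    show "finite N" "N \<noteq> {}"
      using assms(3,4) by (auto simp: sofic_approx_def bij_betw_def)
    show "\<sigma> m ` N \<subseteq> N" if "m \<in> carrier M" for m
      using that into_P inv assms(3) by (auto simp: \<sigma>_def bij_betw_def image_subset_iff)
    show "\<sigma> \<one>\<^bsub>M\<^esub> v = v" if "v \<in> N" for v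
      using that assms(4) inv by (simp add: \<sigma>_def sofic_approx_def)
    show "hamming_dist N (\<sigma> (k1 \<otimes>\<^bsub>M\<^esub> k2)) (\<sigma> k1 \<circ> \<sigma> k2) \<le> \<epsilon>" if "k1 \<in> K" "k2 \<in> K" for k1 k2
      using that assms(4) KM into_P monoid.m_closed[OF assms(1)]
      by (simp add: \<sigma>_def sofic_approx_def hamming_dist_conj_comp[OF assms(3)])
    show "1 - \<epsilon> \<le> hamming_dist N (\<sigma> k1) (\<sigma> k2)" if "k1 \<in> K" "k2 \<in> K" "k1 \<noteq> k2" for k1 k2
      using that assms(4) KM into_P by (simp add: \<sigma>_def sofic_approx_def hamming_dist_conj[OF assms(3)])
    show "card {u \<in> N. \<sigma> k u = v} \<le> \<Delta>" if "k \<in> K" "v \<in> N" for k v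
      using that assms(4) KM into_P inv by (simp add: \<sigma>_def sofic_approx_def card_fiber_conj[OF assms(3)])
  qed
  then show ?thesis unfolding \<sigma>_def .
qed

lemma sofic_approx_on_nat:
  assumes "monoid M" "K \<subseteq> carrier M" "sofic_approx M K \<Delta> \<epsilon> P \<tau>"
  shows "\<exists>(D::nat set) \<sigma>. sofic_approx M K \<Delta> \<epsilon> D \<sigma>"
proof -
  have "finite P" using assms(3) by (simp add: sofic_approx_def)
  then obtain e where "bij_betw e P {0..<card P}" using ex_bij_betw_finite_nat by blast
  with assms show ?thesis by (blast intro: sofic_approx_conj)
qed

lemma monoid_product_group:
  assumes "\<And>i. i \<in> I \<Longrightarrow> monoid (M i)"
  shows "monoid (product_group I M)"
proof (rule monoidI)
  fix x y z assume "x \<in> carrier (product_group I M)" "y \<in> carrier (product_group I M)"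
    "z \<in> carrier (product_group I M)"
  then show "x \<otimes>\<^bsub>product_group I M\<^esub> y \<in> carrier (product_group I M)"
    "x \<otimes>\<^bsub>product_group I M\<^esub> y \<otimes>\<^bsub>product_group I M\<^esub> z =
       x \<otimes>\<^bsub>product_group I M\<^esub> (y \<otimes>\<^bsub>product_group I M\<^esub> z)"
    "\<one>\<^bsub>product_group I M\<^esub> \<otimes>\<^bsub>product_group I M\<^esub> x = x"
    "x \<otimes>\<^bsub>product_group I M\<^esub> \<one>\<^bsub>product_group I M\<^esub> = x"
    using assms by (auto simp: PiE_iff monoid.m_assoc fun_eq_iff extensional_def intro: monoid.m_closed)
qed (use assms in \<open>auto intro: monoid.one_closed\<close>)

lemma finite_separating_coordinates:
  assumes "finite K" "K \<subseteq> extensional I"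
  obtains J where "finite J" "J \<subseteq> I" "\<And>a b. a \<in> K \<Longrightarrow> b \<in> K \<Longrightarrow> a \<noteq> b \<Longrightarrow> \<exists>j\<in>J. a j \<noteq> b j"
proof -
  define pairs where "pairs = {(a, b) \<in> K \<times> K. a \<noteq> b}"
  have "\<forall>ab\<in>pairs. \<exists>j\<in>I. fst ab j \<noteq> snd ab j"
    using assms(2) by (auto simp: pairs_def intro: extensionalityI)
  then obtain w where w: "\<And>ab. ab \<in> pairs \<Longrightarrow> w ab \<in> I \<and> fst ab (w ab) \<noteq> snd ab (w ab)"
    by metis
  have "finite pairs"
    using assms(1) by (intro finite_subset[of pairs "K \<times> K"]) (auto simp: pairs_def)
  show thesis
  proof (rule that[of "w ` pairs"])
    show "finite (w ` pairs)" using \<open>finite pairs\<close> by simp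
    show "w ` pairs \<subseteq> I" using w by blast
    fix a b assume "a \<in> K" "b \<in> K" "a \<noteq> b"
    then have "(a, b) \<in> pairs" by (simp add: pairs_def)
    then show "\<exists>j\<in>w ` pairs. a j \<noteq> b j" using w by fastforce
  qed
qed

definition coordinatewise :: "'j set \<Rightarrow> ('j \<Rightarrow> 'p \<Rightarrow> 'q) \<Rightarrow> ('j \<Rightarrow> 'p) \<Rightarrow> 'j \<Rightarrow> 'q" where
  "coordinatewise J f p = (\<lambda>j\<in>J. f j (p j))"

lemma coordinatewise_in_PiE:
  assumes "p \<in> PiE J D" "\<And>j. j \<in> J \<Longrightarrow> f j ` D j \<subseteq> E j"
  shows "coordinatewise J f p \<in> PiE J E"
  using assms by (auto simp: coordinatewise_def PiE_iff)

lemma coordinatewise_cong: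
  "(\<And>j. j \<in> J \<Longrightarrow> f j = g j) \<Longrightarrow> coordinatewise J f = coordinatewise J g"
  unfolding coordinatewise_def by (intro ext restrict_ext) simp

lemma coordinatewise_comp:
  "coordinatewise J f \<circ> coordinatewise J g = coordinatewise J (\<lambda>j. f j \<circ> g j)"
  unfolding coordinatewise_def by (intro ext restrict_ext) simp

lemma coordinatewise_id:
  assumes "p \<in> PiE J D" "\<And>j v. j \<in> J \<Longrightarrow> v \<in> D j \<Longrightarrow> f j v = v"
  shows "coordinatewise J f p = p"
  using assms by (auto simp: coordinatewise_def PiE_iff extensional_def)

lemma hamming_dist_PiE_coordinate:
  assumes "finite J" "j \<in> J" "\<And>i. i \<in> J \<Longrightarrow> finite (D i) \<and> D i \<noteq> {}"
  shows "hamming_dist (PiE J D) (\<lambda>p. f (p j)) (\<lambda>p. g (p j)) = hamming_dist (D j) f g"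
proof -
  define R where "R = (\<Prod>i\<in>J - {j}. card (D i))"
  have "R > 0" using assms by (simp add: R_def card_gt_0_iff)
  have "{p \<in> PiE J D. f (p j) \<noteq> g (p j)} = PiE J (D(j := {v \<in> D j. f v \<noteq> g v}))"
    using assms(2) by (fastforce simp: PiE_iff extensional_def split: if_splits)
  then have "card {p \<in> PiE J D. f (p j) \<noteq> g (p j)} = card {v \<in> D j. f v \<noteq> g v} * R"
    using assms(1,2) by (simp add: card_PiE prod.remove R_def)
  moreover have "card (PiE J D) = card (D j) * R"
    using assms(1,2) by (simp add: card_PiE prod.remove R_def)
  ultimately show ?thesis
    using \<open>R > 0\<close> by (simp add: hamming_dist_def)
qed

lemma hamming_dist_coordinatewise_le:
  assumes "finite J" "\<And>i. i \<in> J \<Longrightarrow> finite (D i) \<and> D i \<noteq> {}"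
  shows "hamming_dist (PiE J D) (coordinatewise J f) (coordinatewise J g)
    \<le> (\<Sum>j\<in>J. hamming_dist (D j) (f j) (g j))"
proof -
  have "\<exists>j\<in>J. f j (p j) \<noteq> g j (p j)" if "coordinatewise J f p \<noteq> coordinatewise J g p" for p
    using that unfolding coordinatewise_def by (meson restrict_ext)
  then have "hamming_dist (PiE J D) (coordinatewise J f) (coordinatewise J g)
      \<le> (\<Sum>j\<in>J. hamming_dist (PiE J D) (\<lambda>p. f j (p j)) (\<lambda>p. g j (p j)))"
    using assms by (intro hamming_dist_le_sum) (simp_all add: finite_PiE)
  also have "\<dots> = (\<Sum>j\<in>J. hamming_dist (D j) (f j) (g j))"
    using assms by (intro sum.cong refl hamming_dist_PiE_coordinate)
  finally show ?thesis .
qed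

lemma hamming_dist_coordinatewise_ge:
  assumes "finite J" "j \<in> J" "\<And>i. i \<in> J \<Longrightarrow> finite (D i) \<and> D i \<noteq> {}"
  shows "hamming_dist (D j) (f j) (g j) \<le> hamming_dist (PiE J D) (coordinatewise J f) (coordinatewise J g)"
proof -
  have "hamming_dist (D j) (f j) (g j) = hamming_dist (PiE J D) (\<lambda>p. f j (p j)) (\<lambda>p. g j (p j))"
    using assms by (simp add: hamming_dist_PiE_coordinate)
  also have "\<dots> \<le> hamming_dist (PiE J D) (coordinatewise J f) (coordinatewise J g)"
    using assms by (intro hamming_dist_mono) (auto simp: finite_PiE coordinatewise_def dest: fun_cong[where x = j])
  finally show ?thesis .
qed

lemma card_coordinatewise_fiber_le:
  assumes "finite J" "\<And>i. i \<in> J \<Longrightarrow> finite (D i)"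
  shows "card {p \<in> PiE J D. coordinatewise J f p = q} \<le> (\<Prod>j\<in>J. card {u \<in> D j. f j u = q j})"
proof -
  have "{p \<in> PiE J D. coordinatewise J f p = q} \<subseteq> PiE J (\<lambda>j. {u \<in> D j. f j u = q j})"
    by (auto simp: coordinatewise_def)
  then have "card {p \<in> PiE J D. coordinatewise J f p = q} \<le> card (PiE J (\<lambda>j. {u \<in> D j. f j u = q j}))"
    using assms by (intro card_mono) (simp_all add: finite_PiE)
  also have "\<dots> = (\<Prod>j\<in>J. card {u \<in> D j. f j u = q j})"
    using assms(1) by (rule card_PiE)
  finally show ?thesis .
qed

lemma sofic_approx_product_group:
  fixes M :: "'i \<Rightarrow> ('a, 'b) monoid_scheme"
  assumes "finite J" "J \<subseteq> I" "K \<subseteq> carrier (product_group I M)"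
    and separating: "\<And>a b. a \<in> K \<Longrightarrow> b \<in> K \<Longrightarrow> a \<noteq> b \<Longrightarrow> \<exists>j\<in>J. a j \<noteq> b j"
    and approx: "\<And>j. j \<in> J \<Longrightarrow> sofic_approx (M j) ((\<lambda>k. k j) ` K) (\<Delta> j) \<delta> (D j) (\<sigma> j)"
    and "real (card J) * \<delta> \<le> \<epsilon>" "\<delta> \<le> \<epsilon>"
  shows "sofic_approx (product_group I M) K (\<Prod>j\<in>J. \<Delta> j) \<epsilon> (PiE J D)
    (\<lambda>m. coordinatewise J (\<lambda>j. \<sigma> j (m j)))"
proof -
  define \<tau> where "\<tau> = (\<lambda>m :: 'i \<Rightarrow> 'a. coordinatewise J (\<lambda>j. \<sigma> j (m j)))"
  have D: "finite (D j) \<and> D j \<noteq> {}" if "j \<in> J" for j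
    using approx[OF that] by (simp add: sofic_approx_def)
  have "sofic_approx (product_group I M) K (\<Prod>j\<in>J. \<Delta> j) \<epsilon> (PiE J D) \<tau>"
  proof (rule sofic_approxI)
    show "finite (PiE J D)" "PiE J D \<noteq> {}"
      using assms(1) D by (simp_all add: finite_PiE PiE_eq_empty_iff)
  next
    fix m assume "m \<in> carrier (product_group I M)"
    then have "m j \<in> carrier (M j)" if "j \<in> J" for j
      using that assms(2) by (auto simp: PiE_iff)
    then have "\<sigma> j (m j) ` D j \<subseteq> D j" if "j \<in> J" for j
      using approx[OF that] that by (simp add: sofic_approx_def)
    then show "\<tau> m ` PiE J D \<subseteq> PiE J D"
      unfolding \<tau>_def by (intro image_subsetI coordinatewise_in_PiE) blast+
  next
    show "\<tau> \<one>\<^bsub>product_group I M\<^esub> p = p" if "p \<in> PiE J D" for p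
      using that approx assms(2) unfolding \<tau>_def
      by (intro coordinatewise_id) (auto simp: sofic_approx_def)
  next
    fix k1 k2 assume k: "k1 \<in> K" "k2 \<in> K"
    have "\<tau> (k1 \<otimes>\<^bsub>product_group I M\<^esub> k2) = coordinatewise J (\<lambda>j. \<sigma> j (k1 j \<otimes>\<^bsub>M j\<^esub> k2 j))"
      using assms(2) unfolding \<tau>_def by (intro coordinatewise_cong) auto
    then have "hamming_dist (PiE J D) (\<tau> (k1 \<otimes>\<^bsub>product_group I M\<^esub> k2)) (\<tau> k1 \<circ> \<tau> k2)
        \<le> (\<Sum>j\<in>J. hamming_dist (D j) (\<sigma> j (k1 j \<otimes>\<^bsub>M j\<^esub> k2 j)) (\<sigma> j (k1 j) \<circ> \<sigma> j (k2 j)))"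
      using assms(1) D by (simp add: \<tau>_def coordinatewise_comp hamming_dist_coordinatewise_le)
    also have "\<dots> \<le> (\<Sum>j\<in>J. \<delta>)"
      using approx k by (intro sum_mono) (simp add: sofic_approx_def)
    finally show "hamming_dist (PiE J D) (\<tau> (k1 \<otimes>\<^bsub>product_group I M\<^esub> k2)) (\<tau> k1 \<circ> \<tau> k2) \<le> \<epsilon>"
      using assms(6) by simp
  next
    fix k1 k2 assume k: "k1 \<in> K" "k2 \<in> K" "k1 \<noteq> k2"
    then obtain j where j: "j \<in> J" "k1 j \<noteq> k2 j" using separating by blast
    then have "1 - \<epsilon> \<le> hamming_dist (D j) (\<sigma> j (k1 j)) (\<sigma> j (k2 j))"
      using approx[OF j(1)] k assms(7) by (force simp: sofic_approx_def)
    also have "\<dots> \<le> hamming_dist (PiE J D) (\<tau> k1) (\<tau> k2)"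
      unfolding \<tau>_def using assms(1) j(1) D by (rule hamming_dist_coordinatewise_ge)
    finally show "1 - \<epsilon> \<le> hamming_dist (PiE J D) (\<tau> k1) (\<tau> k2)" .
  next
    fix k q assume k: "k \<in> K" and q: "q \<in> PiE J D"
    have "card {p \<in> PiE J D. \<tau> k p = q} \<le> (\<Prod>j\<in>J. card {u \<in> D j. \<sigma> j (k j) u = q j})"
      unfolding \<tau>_def using assms(1) D by (intro card_coordinatewise_fiber_le) auto
    also have "\<dots> \<le> (\<Prod>j\<in>J. \<Delta> j)"
      using approx k q by (intro prod_mono) (auto simp: sofic_approx_def PiE_iff)
    finally show "card {p \<in> PiE J D. \<tau> k p = q} \<le> (\<Prod>j\<in>J. \<Delta> j)" .
  qed
  then show ?thesis unfolding \<tau>_def .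
qed

lemma sofic_approx_product_group_on_nat:
  fixes M :: "'i \<Rightarrow> ('a, 'b) monoid_scheme"
  assumes "\<And>i. i \<in> I \<Longrightarrow> monoid (M i)"
    and "finite J" "J \<subseteq> I" "K \<subseteq> carrier (product_group I M)"
    and "\<And>a b. a \<in> K \<Longrightarrow> b \<in> K \<Longrightarrow> a \<noteq> b \<Longrightarrow> \<exists>j\<in>J. a j \<noteq> b j"
    and approx: "\<And>j \<delta>. j \<in> J \<Longrightarrow> \<delta> > 0 \<Longrightarrow>
      \<exists>(D::nat set) \<sigma>. sofic_approx (M j) ((\<lambda>k. k j) ` K) (\<Delta> j) \<delta> D \<sigma>"
    and "\<epsilon> > 0"
  shows "\<exists>(D::nat set) \<sigma>. sofic_approx (product_group I M) K (\<Prod>j\<in>J. \<Delta> j) \<epsilon> D \<sigma>"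
proof -
  define \<delta> where "\<delta> = \<epsilon> / (card J + 1)"  \<comment> \<open>the \<open>+ 1\<close> covers \<open>J = {}\<close>\<close>
  have "\<delta> > 0" "real (card J) * \<delta> \<le> \<epsilon>" "\<delta> \<le> \<epsilon>"
    using \<open>\<epsilon> > 0\<close> by (auto simp: \<delta>_def field_simps)
  then have "\<forall>j\<in>J. \<exists>(D::nat set) \<sigma>. sofic_approx (M j) ((\<lambda>k. k j) ` K) (\<Delta> j) \<delta> D \<sigma>"
    using approx by blast
  then obtain D :: "'i \<Rightarrow> nat set" where "\<forall>j\<in>J. \<exists>\<sigma>. sofic_approx (M j) ((\<lambda>k. k j) ` K) (\<Delta> j) \<delta> (D j) \<sigma>"
    by (rule bchoice[THEN exE])
  then obtain \<sigma> where "\<forall>j\<in>J. sofic_approx (M j) ((\<lambda>k. k j) ` K) (\<Delta> j) \<delta> (D j) (\<sigma> j)"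
    by (rule bchoice[THEN exE])
  then have "sofic_approx (product_group I M) K (\<Prod>j\<in>J. \<Delta> j) \<epsilon> (PiE J D)
      (\<lambda>m. coordinatewise J (\<lambda>j. \<sigma> j (m j)))"
    using assms(2-5) \<open>real (card J) * \<delta> \<le> \<epsilon>\<close> \<open>\<delta> \<le> \<epsilon>\<close>
    by (intro sofic_approx_product_group[where \<delta> = \<delta>]) auto
  moreover have "monoid (product_group I M)"
    using assms(1) by (rule monoid_product_group)
  ultimately show ?thesis
    using assms(4) sofic_approx_on_nat by blast
qed

theorem proposition3p8:
  fixes I :: "'i set" and M :: "'i \<Rightarrow> ('a, 'b) monoid_scheme"
  assumes "\<And>i. i \<in> I \<Longrightarrow> monoid (M i)"
    and "\<And>i. i \<in> I \<Longrightarrow> strongly_sofic (M i)"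
  shows "strongly_sofic (product_group I M)"
  unfolding strongly_sofic_iff
proof (intro allI impI)
  fix K assume K: "K \<subseteq> carrier (product_group I M) \<and> finite K"
  then have "finite K" "K \<subseteq> extensional I" by (auto simp: PiE_iff)
  then obtain J where J: "finite J" "J \<subseteq> I"
    and separating: "\<And>a b. a \<in> K \<Longrightarrow> b \<in> K \<Longrightarrow> a \<noteq> b \<Longrightarrow> \<exists>j\<in>J. a j \<noteq> b j"
    by (rule finite_separating_coordinates) auto
  have "\<forall>j\<in>J. \<exists>\<Delta>\<ge>1. \<forall>\<epsilon>>0. \<exists>(D::nat set) \<sigma>. sofic_approx (M j) ((\<lambda>k. k j) ` K) \<Delta> \<epsilon> D \<sigma>"
  proof
    fix j assume "j \<in> J"
    then have "j \<in> I" "(\<lambda>k. k j) ` K \<subseteq> carrier (M j)" "finite ((\<lambda>k. k j) ` K)"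
      using J K by auto
    then show "\<exists>\<Delta>\<ge>1. \<forall>\<epsilon>>0. \<exists>(D::nat set) \<sigma>. sofic_approx (M j) ((\<lambda>k. k j) ` K) \<Delta> \<epsilon> D \<sigma>"
      using assms(2) unfolding strongly_sofic_iff by blast
  qed
  then obtain \<Delta> where \<Delta>: "\<forall>j\<in>J. \<Delta> j \<ge> 1 \<and>
      (\<forall>\<epsilon>>0. \<exists>(D::nat set) \<sigma>. sofic_approx (M j) ((\<lambda>k. k j) ` K) (\<Delta> j) \<epsilon> D \<sigma>)"
    by (rule bchoice[THEN exE])
  then have "1 \<le> (\<Prod>j\<in>J. \<Delta> j)" by (intro prod_ge_1) auto
  moreover have "\<exists>(D::nat set) \<sigma>. sofic_approx (product_group I M) K (\<Prod>j\<in>J. \<Delta> j) \<epsilon> D \<sigma>"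
    if "\<epsilon> > 0" for \<epsilon>
    using K separating \<Delta> that
    by (intro sofic_approx_product_group_on_nat[OF assms(1) J]) auto
  ultimately show "\<exists>\<Delta>\<ge>1. \<forall>\<epsilon>>0. \<exists>(D::nat set) \<sigma>. sofic_approx (product_group I M) K \<Delta> \<epsilon> D \<sigma>"
    by blast
qed

end
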